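(* Let $n\geq 1$, $0<\alpha<1$, and let $f:D^n\to D$ be holomorphic, where $D^n=\{z\in\mathbb{C}^n:\|z\|_\infty<1\}$ and $D=\{\zeta\in\mathbb{C}:|\zeta|<1\}$. Let $z_0=(z_{0,1},\dots,z_{0,n})^T\in\partial D^n$ and $1\le r\le n$ be such that $|z_{0,j}|=1$ for $1\le j\le r$ and $|z_{0,j}|<1$ for $r<j\le n$. Suppose $f$ is $C^{1+\alpha}$ at $z_0$ and $f(z_0)=e^{i\theta}$ for some $\theta\in[0,2\pi]$. Put $a=f(0)$. Then there exist nonnegative real numbers $\gamma_1,\dots,\gamma_r$ with $\sum_{j=1}^r\gamma_j\geq1$ such that $$\overline{J_f(z_0)}^T e^{i\theta}=\lambda\,\mathrm{diag}(\gamma_1,\dots,\gamma_r,0,\dots,0)\,z_0,$$ where $\lambda=\dfrac{|1-\bar a e^{i\theta}|^2}{1-|a|^2}>0$.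
   Context: $\|z\|_\infty=\max_j|z_j|$; vectors are column vectors. "$f$ is $C^{1+\alpha}$ at $z_0$" means: there is a neighborhood $V$ of $z_0$ such that $f$ extends to $\overline{D^n}\cap V$ as a $C^1$ function whose first-order partial derivatives are Hölder continuous with exponent $\alpha$ there. $J_f(z_0)=\left(\frac{\partial f}{\partial z_1}(z_0),\dots,\frac{\partial f}{\partial z_n}(z_0)\right)$ is the $1\times n$ complex Jacobian of $f$ at $z_0$, and $\overline{J_f(z_0)}^T$ its conjugate transpose (an $n\times1$ column). $\mathrm{diag}(\gamma_1,\dots,\gamma_r,0,\dots,0)$ is the $n\times n$ diagonal matrix with those diagonal entries. *)

theory Defs
  imports "HOL-Analysis.Analysis"
begin

definition polydisc :: "(complex ^ 'n) set" where
  "polydisc = {z. \<forall>j. norm (z $ j) < 1}"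

definition cpolydisc :: "(complex ^ 'n) set" where
  "cpolydisc = {z. \<forall>j. norm (z $ j) \<le> 1}"

definition holo_on :: "(complex ^ 'n \<Rightarrow> complex) \<Rightarrow> (complex ^ 'n) set \<Rightarrow> bool" where
  "holo_on f S \<longleftrightarrow> (\<forall>z\<in>S. \<exists>c :: complex ^ 'n.
      (f has_derivative (\<lambda>h. \<Sum>j\<in>UNIV. c $ j * h $ j)) (at z))"

text \<open>f is C^{1+alpha} at z0, witnessed by: an open neighbourhood V of z0, a C^1 extension g
  of f to the closed polydisc intersected with V with (real) derivative Dg, whose first order
  (real) partial derivatives Dg z b (b ranging over the real basis) are alpha-Hoelder there.\<close>
definition C1alpha_ext_at ::
  "real \<Rightarrow> (complex ^ 'n \<Rightarrow> complex) \<Rightarrow> complex ^ 'n \<Rightarrow> (complex ^ 'n \<Rightarrow> complex)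
     \<Rightarrow> (complex ^ 'n \<Rightarrow> complex ^ 'n \<Rightarrow> complex) \<Rightarrow> bool" where
  "C1alpha_ext_at \<alpha> f z0 g Dg \<longleftrightarrow>
     (\<exists>V. open V \<and> z0 \<in> V \<and>
        (\<forall>z\<in>polydisc \<inter> V. g z = f z) \<and>
        (\<forall>z\<in>cpolydisc \<inter> V. (g has_derivative Dg z) (at z within (cpolydisc \<inter> V))) \<and>
        (\<exists>C. \<forall>b\<in>Basis. \<forall>z\<in>cpolydisc \<inter> V. \<forall>w\<in>cpolydisc \<inter> V.
             norm (Dg z b - Dg w b) \<le> C * dist z w powr \<alpha>))"

text \<open>Complex (Wirtinger) partial derivative d/dz_j computed from the real derivative.\<close>
definition cpartial :: "(complex ^ 'n \<Rightarrow> complex) \<Rightarrow> 'n \<Rightarrow> complex" where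
  "cpartial L j = (L (axis j 1) - \<i> * L (axis j \<i>)) / 2"

end

theory Submission
  imports Defs "HOL-Complex_Analysis.Riemann_Mapping"
begin

(* The derivative of the C^1 extension g at the boundary point z0 is complex linear, being the
   limit of the holomorphic derivatives at nearby interior points; write it as h |-> sum_j c_j h_j.
   Since |g| < 1 inside the polydisc and |g z0| = 1, moving from z0 into the polydisc cannot
   increase Re (cnj (g z0) * g); testing this first-order condition in coordinate directions gives
   c_j = 0 for the interior coordinates and cnj (g z0) c_j z0_j >= 0 for the boundary ones.
   The bound on the sum is a Julia-type estimate: the Moebius map sending f 0 to 0, composed with
   the restriction of f to the complex line through 0 and z0, is a self-map of the disc fixing 0,
   so by Schwarz's lemma it shrinks the radius towards z0; differentiating along that radius at
   z0 gives Re (cnj (g z0) * Dg z0 z0) >= lambda. *)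

lemma hoelder_imp_continuous_on:
  fixes h :: "'a::metric_space \<Rightarrow> 'b::real_normed_vector"
  assumes "0 < \<alpha>" and "\<And>z w. z \<in> S \<Longrightarrow> w \<in> S \<Longrightarrow> norm (h z - h w) \<le> C * dist z w powr \<alpha>"
  shows "continuous_on S h"
  unfolding continuous_on_def
proof
  fix x assume x: "x \<in> S"
  have "((\<lambda>z. C * dist z x powr \<alpha>) \<longlongrightarrow> C * dist x x powr \<alpha>) (at x within S)"
    using assms(1) by (intro tendsto_intros) auto
  hence lim: "((\<lambda>z. C * dist z x powr \<alpha>) \<longlongrightarrow> 0) (at x within S)" by simp
  have ev: "\<forall>\<^sub>F z in at x within S. norm (h z - h x) \<le> C * dist z x powr \<alpha>"
    using assms(2) x by (auto simp: eventually_at_filter intro!: always_eventually)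
  have "((\<lambda>z. h z - h x) \<longlongrightarrow> 0) (at x within S)"
    by (rule Lim_null_comparison[OF ev lim])
  thus "(h \<longlongrightarrow> h x) (at x within S)" by (simp add: LIM_zero_iff)
qed

lemma open_polydisc: "open (polydisc :: (complex ^ 'n) set)"
proof -
  have eq: "polydisc = (\<Inter>j\<in>UNIV. {z :: complex ^ 'n. cmod (z $ j) < 1})"
    by (auto simp: polydisc_def)
  have "open {z :: complex ^ 'n. cmod (z $ j) < 1}" for j
    by (intro open_Collect_less continuous_intros)
  thus ?thesis unfolding eq by (intro open_INT) auto
qed

lemma polydisc_subset_cpolydisc: "polydisc \<subseteq> cpolydisc"
  by (auto simp: polydisc_def cpolydisc_def less_imp_le)

lemma one_minus_cnj_mult_nonzero:
  fixes a z :: complex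
  assumes "norm a < 1" and "norm z \<le> 1"
  shows "1 - cnj a * z \<noteq> 0"
proof -
  have "norm (cnj a * z) \<le> norm a"
    using assms(2) by (simp add: norm_mult mult_left_le)
  thus ?thesis using assms(1) by auto
qed

lemma cnj_mult_self_norm_1:
  fixes z :: complex
  assumes "norm z = 1"
  shows "cnj z * z = 1"
  using complex_norm_square[of z] assms by (simp add: mult.commute)

lemma Re_cnj_mult_le_norm:
  fixes a z :: complex
  assumes "norm a = 1"
  shows "Re (cnj a * z) \<le> norm z"
  using complex_Re_le_cmod[of "cnj a * z"] assms by (simp add: norm_mult)

lemma norm_Moebius_function_eq_1:
  assumes "norm a < 1" and "norm z = 1"
  shows "norm (Moebius_function t a z) = 1"
proof -
  have "1 - cnj a * z = z * cnj (z - a)"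
    using assms(2) complex_norm_square[of z] by (simp add: algebra_simps)
  hence "norm (1 - cnj a * z) = norm (z - a)"
    using assms(2) by (metis complex_mod_cnj mult_1 norm_mult)
  moreover have "1 - cnj a * z \<noteq> 0"
    using one_minus_cnj_mult_nonzero[of a z] assms by simp
  ultimately show ?thesis using assms by (auto simp: Moebius_function_def norm_divide norm_mult)
qed

lemma has_field_derivative_Moebius_function_boundary:
  assumes "norm a < 1" and "norm \<eta> = 1"
  shows "((\<lambda>x. cnj (Moebius_function 0 a \<eta>) * Moebius_function 0 a x) has_field_derivative
            cnj \<eta> * of_real ((1 - (norm a)\<^sup>2) / (norm (1 - cnj a * \<eta>))\<^sup>2)) (at \<eta>)"
proof -
  define D where "D = 1 - cnj a * \<eta>"
  have D: "D \<noteq> 0"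
    using one_minus_cnj_mult_nonzero[of a \<eta>] assms unfolding D_def by simp
  have "((\<lambda>x. Moebius_function 0 a x) has_field_derivative (1 - cnj a * a) / D\<^sup>2) (at \<eta>)"
    using D unfolding D_def Moebius_function_simple
    by (auto intro!: derivative_eq_intros simp: field_simps power2_eq_square)
  hence deriv: "((\<lambda>x. cnj (Moebius_function 0 a \<eta>) * Moebius_function 0 a x) has_field_derivative
      cnj (Moebius_function 0 a \<eta>) * ((1 - cnj a * a) / D\<^sup>2)) (at \<eta>)"
    by (rule DERIV_cmult)
  have "cnj (Moebius_function 0 a \<eta>) = cnj \<eta> * D / cnj D"
    using assms(2) complex_norm_square[of \<eta>] by (simp add: Moebius_function_def D_def algebra_simps)
  hence "cnj (Moebius_function 0 a \<eta>) * ((1 - cnj a * a) / D\<^sup>2) = cnj \<eta> * (1 - cnj a * a) / (cnj D * D)"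
    using D by (simp add: field_simps power2_eq_square)
  also have "\<dots> = cnj \<eta> * of_real ((1 - (norm a)\<^sup>2) / (norm D)\<^sup>2)"
  proof -
    have "cnj a * a = of_real ((norm a)\<^sup>2)" and "cnj D * D = of_real ((norm D)\<^sup>2)"
      by (metis complex_norm_square mult.commute)+
    thus ?thesis by (simp only: of_real_divide of_real_diff of_real_1 times_divide_eq_right)
  qed
  finally show ?thesis using deriv by (simp only: D_def)
qed

lemma norm_add_scaleR_power2:
  fixes z v :: complex
  assumes "norm z = 1"
  shows "(norm (z + t *\<^sub>R v))\<^sup>2 = 1 + t * (2 * Re (cnj z * v) + t * (norm v)\<^sup>2)"
proof -
  have "(norm (z + t *\<^sub>R v))\<^sup>2 = (Re z)\<^sup>2 + (Im z)\<^sup>2 + t * (2 * Re (cnj z * v) + t * (norm v)\<^sup>2)"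
    unfolding cmod_power2 by (simp add: power2_eq_square algebra_simps)
  thus ?thesis using assms by (simp add: cmod_power2[symmetric])
qed

lemma eventually_norm_add_scaleR_less_1:
  fixes z v :: complex
  assumes "norm z = 1" and "Re (cnj z * v) < 0"
  shows "\<forall>\<^sub>F t in at_right 0. norm (z + t *\<^sub>R v) < 1"
proof -
  have "((\<lambda>t. 2 * Re (cnj z * v) + t * (norm v)\<^sup>2) \<longlongrightarrow> 2 * Re (cnj z * v) + 0 * (norm v)\<^sup>2) (at_right 0)"
    by (intro tendsto_intros)
  hence "((\<lambda>t. 2 * Re (cnj z * v) + t * (norm v)\<^sup>2) \<longlongrightarrow> 2 * Re (cnj z * v)) (at_right 0)"
    by simp
  hence "\<forall>\<^sub>F t in at_right 0. 2 * Re (cnj z * v) + t * (norm v)\<^sup>2 < 0"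
    by (rule order_tendstoD(2)) (use assms(2) in simp)
  with eventually_at_right_less[of 0] show ?thesis
  proof eventually_elim
    case (elim t)
    hence "(norm (z + t *\<^sub>R v))\<^sup>2 < 1"
      unfolding norm_add_scaleR_power2[OF assms(1)] by (simp add: mult_pos_neg)
    thus ?case by (simp add: power_less_one_iff)
  qed
qed

lemma complex_linear_eq_sum_axis:
  fixes L :: "complex ^ 'n \<Rightarrow> complex"
  assumes "linear L" and "\<And>j. L (axis j \<i>) = \<i> * L (axis j 1)"
  shows "L h = (\<Sum>j\<in>UNIV. L (axis j 1) * h $ j)"
proof -
  interpret linear L by fact
  have axis: "L (axis j u) = L (axis j 1) * u" for j u
  proof -
    have "axis j u = Re u *\<^sub>R axis j 1 + Im u *\<^sub>R axis j \<i>"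
      by (simp add: vec_eq_iff axis_def complex_eq_iff)
    hence "L (axis j u) = Re u *\<^sub>R L (axis j 1) + Im u *\<^sub>R L (axis j \<i>)"
      by (simp add: add scale)
    also have "\<dots> = L (axis j 1) * u"
      using assms(2) by (simp add: scaleR_conv_of_real complex_eq_iff algebra_simps)
    finally show ?thesis .
  qed
  have "h = (\<Sum>j\<in>UNIV. axis j (h $ j))"
    by (simp add: vec_eq_iff axis_def sum_component)
  hence "L h = L (\<Sum>j\<in>UNIV. axis j (h $ j))" by (rule arg_cong)
  also have "\<dots> = (\<Sum>j\<in>UNIV. L (axis j (h $ j)))"
    by (rule sum)
  also have "\<dots> = (\<Sum>j\<in>UNIV. L (axis j 1) * h $ j)"
    by (rule sum.cong[OF refl axis])
  finally show ?thesis .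
qed

lemma cpartial_complex_linear:
  assumes "L (axis j \<i>) = \<i> * L (axis j 1)"
  shows "cpartial L j = L (axis j 1)"
  using assms by (simp add: cpartial_def)

lemma has_real_derivative_Re_along_ray:
  fixes g :: "'a::real_normed_vector \<Rightarrow> complex"
  assumes "(g has_derivative L) (at z0 within S)"
    and "(\<lambda>t. z0 + t *\<^sub>R v) ` T \<subseteq> S"
    and "(\<Psi> has_field_derivative P') (at (g z0))"
  shows "((\<lambda>t. Re (\<Psi> (g (z0 + t *\<^sub>R v)))) has_real_derivative Re (P' * L v)) (at 0 within T)"
proof -
  define p where "p t = z0 + t *\<^sub>R v" for t :: real
  have "(p has_derivative (\<lambda>t. t *\<^sub>R v)) (at 0 within T)"
    unfolding p_def by (auto intro!: derivative_eq_intros)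
  moreover have "(g has_derivative L) (at (p 0) within p ` T)"
    using has_derivative_subset[OF assms(1,2)] by (simp add: p_def)
  ultimately have gp: "(g \<circ> p has_derivative (\<lambda>t. L (t *\<^sub>R v))) (at 0 within T)"
    by (auto dest: diff_chain_within simp: comp_def)
  have "(\<Psi> has_derivative (*) P') (at ((g \<circ> p) 0) within (g \<circ> p) ` T)"
    using assms(3) by (auto simp: p_def has_field_derivative_def intro: has_derivative_at_withinI)
  from diff_chain_within[OF gp this]
  have "(\<Psi> \<circ> (g \<circ> p) has_derivative (\<lambda>t. P' * L (t *\<^sub>R v))) (at 0 within T)"
    by (simp add: comp_def)
  hence "((\<lambda>t. Re ((\<Psi> \<circ> (g \<circ> p)) t)) has_derivative (\<lambda>t. Re (P' * L (t *\<^sub>R v)))) (at 0 within T)"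
    by (rule bounded_linear.has_derivative[OF bounded_linear_Re])
  moreover have "(\<lambda>t. Re (P' * L (t *\<^sub>R v))) = (*) (Re (P' * L v))"
    using linear_scale[OF has_derivative_linear[OF assms(1)]]
    by (auto simp: fun_eq_iff scaleR_conv_of_real algebra_simps)
  ultimately show ?thesis by (simp add: has_field_derivative_def p_def comp_def)
qed

lemma Re_directional_derivative_le:
  fixes g :: "'a::real_normed_vector \<Rightarrow> complex"
  assumes "(g has_derivative L) (at z0 within S)" and "0 < \<delta>"
    and "\<And>t. 0 < t \<Longrightarrow> t < \<delta> \<Longrightarrow> z0 + t *\<^sub>R v \<in> S"
    and "(\<Psi> has_field_derivative P') (at (g z0))"
    and "\<And>t. 0 < t \<Longrightarrow> t < \<delta> \<Longrightarrow> Re (\<Psi> (g (z0 + t *\<^sub>R v))) \<le> Re (\<Psi> (g z0)) - k * t"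
  shows "Re (P' * L v) \<le> - k"
proof -
  define h where "h t = Re (\<Psi> (g (z0 + t *\<^sub>R v)))" for t
  have "(h has_real_derivative Re (P' * L v)) (at 0 within {0<..<\<delta>})"
    unfolding h_def using assms(3) by (intro has_real_derivative_Re_along_ray[OF assms(1) _ assms(4)]) auto
  hence "((\<lambda>t. (h t - h 0) / t) \<longlongrightarrow> Re (P' * L v)) (at 0 within {0<..<\<delta>})"
    by (simp add: has_field_derivative_iff)
  moreover have "(h t - h 0) / t \<le> - k" if "0 < t" "t < \<delta>" for t
    using assms(5)[OF that] that(1) by (simp add: h_def divide_le_eq)
  hence "\<forall>\<^sub>F t in at 0 within {0<..<\<delta>}. (h t - h 0) / t \<le> - k"
    by (auto simp: eventually_at_filter intro!: always_eventually)
  moreover have "\<not> trivial_limit (at (0::real) within {0<..<\<delta>})"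
    using assms(2) by (simp add: trivial_limit_within islimpt_greaterThanLessThan1)
  ultimately show ?thesis by (rule tendsto_upperbound)
qed

lemma scalar_mult_in_polydisc:
  assumes "z \<in> cpolydisc" and "norm \<zeta> < 1"
  shows "\<zeta> *s z \<in> polydisc"
  using assms by (auto simp: polydisc_def cpolydisc_def norm_mult intro: le_less_trans[OF mult_left_le])

lemma eventually_at_right_in_polydisc:
  assumes "z0 \<in> cpolydisc" and "\<And>k. norm (z0 $ k) = 1 \<Longrightarrow> Re (cnj (z0 $ k) * v $ k) < 0"
  shows "\<forall>\<^sub>F t in at_right 0. z0 + t *\<^sub>R v \<in> polydisc"
proof -
  have "\<forall>\<^sub>F t in at_right 0. norm (z0 $ k + t *\<^sub>R v $ k) < 1" for k
  proof (cases "norm (z0 $ k) = 1")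
    case True
    show ?thesis by (rule eventually_norm_add_scaleR_less_1[OF True assms(2)[OF True]])
  next
    case False
    hence "norm (z0 $ k + 0 *\<^sub>R v $ k) < 1" using assms(1) by (auto simp: cpolydisc_def order_less_le)
    moreover have "((\<lambda>t. norm (z0 $ k + t *\<^sub>R v $ k)) \<longlongrightarrow> norm (z0 $ k + 0 *\<^sub>R v $ k)) (at_right 0)"
      by (intro tendsto_intros)
    ultimately show ?thesis by (simp add: order_tendstoD(2))
  qed
  hence "\<forall>\<^sub>F t in at_right 0. \<forall>k. norm (z0 $ k + t *\<^sub>R v $ k) < 1"
    by (rule eventually_all_finite)
  thus ?thesis by (simp add: polydisc_def)
qed

lemma holomorphic_on_polydisc_slice:
  fixes f :: "complex ^ 'n \<Rightarrow> complex"
  assumes "holo_on f polydisc" and "z0 \<in> cpolydisc"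
  shows "(\<lambda>\<zeta>. f (\<zeta> *s z0)) holomorphic_on ball 0 1"
  unfolding holomorphic_on_def
proof
  fix \<zeta> :: complex assume "\<zeta> \<in> ball 0 1"
  hence "\<zeta> *s z0 \<in> polydisc" using assms(2) by (simp add: scalar_mult_in_polydisc)
  then obtain c :: "complex ^ 'n" where
    fd: "(f has_derivative (\<lambda>h. \<Sum>j\<in>UNIV. c $ j * h $ j)) (at (\<zeta> *s z0))"
    using assms(1) by (auto simp: holo_on_def)
  have "linear (\<lambda>\<zeta>::complex. \<zeta> *s z0)"
    by (rule linearI) (simp_all add: vec_eq_iff algebra_simps)
  hence "((\<lambda>\<zeta>. \<zeta> *s z0) has_derivative (\<lambda>\<zeta>. \<zeta> *s z0)) (at \<zeta>)"
    by (simp add: bounded_linear_imp_has_derivative linear_conv_bounded_linear)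
  from diff_chain_at[OF this fd]
  have "((\<lambda>\<zeta>. f (\<zeta> *s z0)) has_derivative (\<lambda>\<zeta>. \<Sum>j\<in>UNIV. c $ j * (\<zeta> * z0 $ j))) (at \<zeta>)"
    by (simp add: comp_def vector_scalar_mult_def)
  moreover have "(\<lambda>\<zeta>. \<Sum>j\<in>UNIV. c $ j * (\<zeta> * z0 $ j)) = (*) (\<Sum>j\<in>UNIV. c $ j * z0 $ j)"
    by (simp add: fun_eq_iff sum_distrib_left mult_ac)
  ultimately have "((\<lambda>\<zeta>. f (\<zeta> *s z0)) has_derivative (*) (\<Sum>j\<in>UNIV. c $ j * z0 $ j)) (at \<zeta>)"
    by simp
  thus "(\<lambda>\<zeta>. f (\<zeta> *s z0)) field_differentiable at \<zeta> within ball 0 1"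
    by (auto simp: field_differentiable_def has_field_derivative_def intro: has_derivative_at_withinI)
qed

lemma norm_Moebius_polydisc_slice_le:
  assumes "holo_on f polydisc" and "\<And>z. z \<in> polydisc \<Longrightarrow> norm (f z) < 1"
    and "z0 \<in> cpolydisc" and "norm \<zeta> < 1"
  shows "norm (Moebius_function 0 (f 0) (f (\<zeta> *s z0))) \<le> norm \<zeta>"
proof -
  define F where "F = Moebius_function 0 (f 0) \<circ> (\<lambda>\<xi>. f (\<xi> *s z0))"
  have f_ball: "norm (f (\<xi> *s z0)) < 1" if "norm \<xi> < 1" for \<xi>
    using assms(2,3) that by (simp add: scalar_mult_in_polydisc)
  hence a: "norm (f 0) < 1" by (metis norm_zero vector_smult_lzero zero_less_one)
  have "F holomorphic_on ball 0 1"
    unfolding F_def using f_ball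
    by (intro holomorphic_on_compose_gen[OF holomorphic_on_polydisc_slice[OF assms(1,3)]
        Moebius_function_holomorphic[OF a]]) auto
  moreover have "F 0 = 0" by (simp add: F_def Moebius_function_eq_zero)
  moreover have "norm (F \<xi>) < 1" if "norm \<xi> < 1" for \<xi>
    using f_ball[OF that] a by (simp add: F_def Moebius_function_norm_lt_1)
  ultimately have "norm (F \<zeta>) \<le> norm \<zeta>" using assms(4) by (rule Schwarz_Lemma(1))
  thus ?thesis by (simp add: F_def)
qed

locale polydisc_boundary_point =
  fixes f g :: "complex ^ 'n \<Rightarrow> complex" and Dg :: "complex ^ 'n \<Rightarrow> complex ^ 'n \<Rightarrow> complex"
    and z0 :: "complex ^ 'n" and V :: "(complex ^ 'n) set"
  assumes holo: "holo_on f polydisc"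
    and maps_into_disc: "\<And>z. z \<in> polydisc \<Longrightarrow> norm (f z) < 1"
    and z0_in_cpolydisc: "z0 \<in> cpolydisc"
    and open_V: "open V" and z0_in_V: "z0 \<in> V"
    and g_eq_f: "\<And>z. z \<in> polydisc \<inter> V \<Longrightarrow> g z = f z"
    and g_deriv: "\<And>z. z \<in> cpolydisc \<inter> V \<Longrightarrow> (g has_derivative Dg z) (at z within cpolydisc \<inter> V)"
    and Dg_continuous: "\<And>b. b \<in> Basis \<Longrightarrow> continuous (at z0 within cpolydisc \<inter> V) (\<lambda>z. Dg z b)"
    and norm_g_z0: "norm (g z0) = 1"
begin

lemma z0_in_domain: "z0 \<in> cpolydisc \<inter> V"
  using z0_in_cpolydisc z0_in_V by simp

lemma z0_notin_polydisc: "z0 \<notin> polydisc"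
  using maps_into_disc g_eq_f z0_in_V norm_g_z0 by force

lemma Dg_Cauchy_Riemann_interior:
  assumes "z \<in> polydisc \<inter> V"
  shows "Dg z (axis j \<i>) = \<i> * Dg z (axis j 1)"
proof -
  have open_domain: "open (polydisc \<inter> V)" using open_polydisc open_V by auto
  obtain c :: "complex ^ 'n" where "(f has_derivative (\<lambda>h. \<Sum>j\<in>UNIV. c $ j * h $ j)) (at z)"
    using holo assms by (auto simp: holo_on_def)
  hence "(g has_derivative (\<lambda>h. \<Sum>j\<in>UNIV. c $ j * h $ j)) (at z)"
    using open_domain assms by (rule has_derivative_transform_within_open) (simp add: g_eq_f)
  moreover have "(g has_derivative Dg z) (at z)"
  proof -
    have "(g has_derivative Dg z) (at z within polydisc \<inter> V)"
      using assms polydisc_subset_cpolydisc by (intro has_derivative_subset[OF g_deriv]) auto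
    thus ?thesis using at_within_open[OF assms open_domain] by simp
  qed
  ultimately have "Dg z = (\<lambda>h. \<Sum>j\<in>UNIV. c $ j * h $ j)" by (metis has_derivative_unique)
  thus ?thesis by (simp add: axis_def if_distrib cong: if_cong)
qed

lemma eventually_inward_in_domain:
  assumes inward: "\<And>k. norm (z0 $ k) = 1 \<Longrightarrow> Re (cnj (z0 $ k) * v $ k) < 0"
  shows "\<forall>\<^sub>F t in at_right 0. z0 + t *\<^sub>R v \<in> polydisc \<inter> V"
proof -
  have "((\<lambda>t. z0 + t *\<^sub>R v) \<longlongrightarrow> z0 + 0 *\<^sub>R v) (at_right 0)"
    by (intro tendsto_intros)
  hence "\<forall>\<^sub>F t in at_right 0. z0 + t *\<^sub>R v \<in> V"
    using open_V z0_in_V by (auto dest: topological_tendstoD)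
  moreover have "\<forall>\<^sub>F t in at_right 0. z0 + t *\<^sub>R v \<in> polydisc"
    using z0_in_cpolydisc inward by (rule eventually_at_right_in_polydisc)
  ultimately show ?thesis
    by (auto elim: eventually_elim2)
qed

lemma eventually_radial_in_domain:
  "\<forall>\<^sub>F t in at_right 0. z0 + t *\<^sub>R (- z0) \<in> polydisc \<inter> V"
  by (rule eventually_inward_in_domain) (simp add: complex_norm_square[symmetric] mult.commute)

lemma z0_islimpt_domain: "z0 islimpt polydisc \<inter> V"
  unfolding islimpt_approachable
proof (intro allI impI)
  fix e :: real assume "0 < e"
  have "((\<lambda>t. z0 + t *\<^sub>R (- z0)) \<longlongrightarrow> z0 + 0 *\<^sub>R (- z0)) (at_right 0)"
    by (intro tendsto_intros)
  hence "((\<lambda>t. z0 + t *\<^sub>R (- z0)) \<longlongrightarrow> z0) (at_right 0)" by simp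
  from tendstoD[OF this \<open>0 < e\<close>]
  have "\<forall>\<^sub>F t in at_right 0. dist (z0 + t *\<^sub>R (- z0)) z0 < e" .
  with eventually_radial_in_domain have "\<forall>\<^sub>F t in at_right 0.
      z0 + t *\<^sub>R (- z0) \<in> polydisc \<inter> V \<and> dist (z0 + t *\<^sub>R (- z0)) z0 < e"
    by (rule eventually_conj)
  moreover have "at_right (0::real) \<noteq> bot" by simp
  ultimately obtain t where "z0 + t *\<^sub>R (- z0) \<in> polydisc \<inter> V" "dist (z0 + t *\<^sub>R (- z0)) z0 < e"
    using eventually_happens' by blast
  thus "\<exists>x'\<in>polydisc \<inter> V. x' \<noteq> z0 \<and> dist x' z0 < e"
    using z0_notin_polydisc by (intro bexI[of _ "z0 + t *\<^sub>R (- z0)"]) auto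
qed

lemma Dg_z0_Cauchy_Riemann: "Dg z0 (axis j \<i>) = \<i> * Dg z0 (axis j 1)"
proof -
  define E where "E z = Dg z (axis j \<i>) - \<i> * Dg z (axis j 1)" for z
  have basis: "axis j 1 \<in> (Basis :: (complex ^ 'n) set)" "axis j \<i> \<in> (Basis :: (complex ^ 'n) set)"
    by (auto simp: Basis_vec_def Basis_complex_def)
  have "continuous (at z0 within cpolydisc \<inter> V) E"
    unfolding E_def using Dg_continuous[OF basis(1)] Dg_continuous[OF basis(2)]
    by (intro continuous_intros)
  hence "continuous (at z0 within polydisc \<inter> V) E"
    by (rule continuous_within_subset) (use polydisc_subset_cpolydisc in auto)
  hence "(E \<longlongrightarrow> E z0) (at z0 within polydisc \<inter> V)"
    by (simp add: continuous_within)
  moreover have "(E \<longlongrightarrow> 0) (at z0 within polydisc \<inter> V)"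
    by (rule tendsto_eventually) (auto simp: eventually_at_filter E_def Dg_Cauchy_Riemann_interior)
  moreover have "\<not> trivial_limit (at z0 within polydisc \<inter> V)"
    using z0_islimpt_domain by (simp add: trivial_limit_within)
  ultimately have "E z0 = 0" using tendsto_unique by blast
  thus ?thesis by (simp add: E_def)
qed

lemma Dg_z0_eq_sum_cpartial: "Dg z0 h = (\<Sum>j\<in>UNIV. cpartial (Dg z0) j * h $ j)"
proof -
  have "linear (Dg z0)"
    using g_deriv[OF z0_in_domain] by (rule has_derivative_linear)
  hence "Dg z0 h = (\<Sum>j\<in>UNIV. Dg z0 (axis j 1) * h $ j)"
    by (rule complex_linear_eq_sum_axis[OF _ Dg_z0_Cauchy_Riemann])
  thus ?thesis by (simp only: cpartial_complex_linear[OF Dg_z0_Cauchy_Riemann])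
qed

lemma cnj_g_z0_mult_g_z0: "cnj (g z0) * g z0 = 1"
  using norm_g_z0 by (rule cnj_mult_self_norm_1)

lemma Dg_z0_axis: "Dg z0 (axis j u) = cpartial (Dg z0) j * u"
  by (simp add: Dg_z0_eq_sum_cpartial axis_def if_distrib cong: if_cong)

lemma Re_cnj_g_Dg_inward_strict:
  assumes inward: "\<And>k. norm (z0 $ k) = 1 \<Longrightarrow> Re (cnj (z0 $ k) * v $ k) < 0"
  shows "Re (cnj (g z0) * Dg z0 v) \<le> 0"
proof -
  obtain \<delta> where "0 < \<delta>" and dom: "\<And>t. 0 < t \<Longrightarrow> t < \<delta> \<Longrightarrow> z0 + t *\<^sub>R v \<in> polydisc \<inter> V"
    using eventually_inward_in_domain[OF inward] unfolding eventually_at_right_field by auto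
  have "Re (cnj (g z0) * Dg z0 v) \<le> - 0"
  proof (rule Re_directional_derivative_le[where \<Psi> = "\<lambda>x. cnj (g z0) * x", OF g_deriv[OF z0_in_domain] \<open>0 < \<delta>\<close>])
    show "z0 + t *\<^sub>R v \<in> cpolydisc \<inter> V" if "0 < t" "t < \<delta>" for t
      using dom[OF that] polydisc_subset_cpolydisc by auto
    show "((\<lambda>x. cnj (g z0) * x) has_field_derivative cnj (g z0)) (at (g z0))"
      by (auto intro!: derivative_eq_intros)
    show "Re (cnj (g z0) * g (z0 + t *\<^sub>R v)) \<le> Re (cnj (g z0) * g z0) - 0 * t" if "0 < t" "t < \<delta>" for t
    proof -
      have "Re (cnj (g z0) * g (z0 + t *\<^sub>R v)) \<le> norm (g (z0 + t *\<^sub>R v))"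
        using norm_g_z0 by (rule Re_cnj_mult_le_norm)
      also have "\<dots> < 1"
        using dom[OF that] by (simp add: g_eq_f maps_into_disc)
      finally show ?thesis by (simp add: cnj_g_z0_mult_g_z0)
    qed
  qed
  thus ?thesis by simp
qed

lemma Re_cnj_g_Dg_inward:
  assumes inward: "\<And>k. norm (z0 $ k) = 1 \<Longrightarrow> Re (cnj (z0 $ k) * v $ k) \<le> 0"
  shows "Re (cnj (g z0) * Dg z0 v) \<le> 0"
proof -
  define d where "d = (\<chi> k. if norm (z0 $ k) = 1 then - z0 $ k else 0)"
  have lin: "linear (Dg z0)"
    using g_deriv[OF z0_in_domain] by (rule has_derivative_linear)
  have "Re (cnj (g z0) * Dg z0 v) + e * Re (cnj (g z0) * Dg z0 d) \<le> 0" if "0 < e" for e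
  proof -
    have "Re (cnj (z0 $ k) * (v + e *\<^sub>R d) $ k) < 0" if "norm (z0 $ k) = 1" for k
    proof -
      have dk: "(v + e *\<^sub>R d) $ k = v $ k - of_real e * z0 $ k"
        using that by (simp add: d_def scaleR_conv_of_real[where 'a = complex])
      have "cnj (z0 $ k) * (v + e *\<^sub>R d) $ k = cnj (z0 $ k) * v $ k - of_real e * (cnj (z0 $ k) * z0 $ k)"
        unfolding dk by (simp add: algebra_simps)
      moreover have "cnj (z0 $ k) * z0 $ k = 1"
        using that by (rule cnj_mult_self_norm_1)
      ultimately show ?thesis using inward[OF that] \<open>0 < e\<close> by simp
    qed
    hence "Re (cnj (g z0) * Dg z0 (v + e *\<^sub>R d)) \<le> 0" by (rule Re_cnj_g_Dg_inward_strict)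
    thus ?thesis using lin by (simp add: linear_add linear_scale algebra_simps)
  qed
  hence "\<forall>\<^sub>F e in at_right 0. Re (cnj (g z0) * Dg z0 v) + e * Re (cnj (g z0) * Dg z0 d) \<le> 0"
    using eventually_at_right_less[of 0] by (auto elim: eventually_mono)
  moreover have "((\<lambda>e. Re (cnj (g z0) * Dg z0 v) + e * Re (cnj (g z0) * Dg z0 d))
      \<longlongrightarrow> Re (cnj (g z0) * Dg z0 v) + 0 * Re (cnj (g z0) * Dg z0 d)) (at_right 0)"
    by (intro tendsto_intros)
  ultimately have "Re (cnj (g z0) * Dg z0 v) + 0 * Re (cnj (g z0) * Dg z0 d) \<le> 0"
    by (intro tendsto_upperbound) auto
  thus ?thesis by simp
qed

lemma cpartial_eq_0_interior:
  assumes "norm (z0 $ j) < 1"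
  shows "cpartial (Dg z0) j = 0"
proof -
  define w where "w = cnj (g z0) * cpartial (Dg z0) j"
  have "Re (cnj (g z0) * Dg z0 (axis j (cnj w))) \<le> 0"
    using assms by (intro Re_cnj_g_Dg_inward) (auto simp: axis_def)
  hence "Re (w * cnj w) \<le> 0" by (simp add: Dg_z0_axis w_def mult.assoc)
  hence "w = 0" by (simp add: complex_norm_square[symmetric] del: of_real_power)
  moreover have "cnj (g z0) \<noteq> 0" using norm_g_z0 by auto
  ultimately show ?thesis by (simp add: w_def)
qed

lemma boundary_coefficient_nonneg:
  "Im (cnj (g z0) * cpartial (Dg z0) j * z0 $ j) = 0 \<and> 0 \<le> Re (cnj (g z0) * cpartial (Dg z0) j * z0 $ j)"
proof (cases "norm (z0 $ j) = 1")
  case True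
  define w where "w = cnj (g z0) * cpartial (Dg z0) j * z0 $ j"
  have unit: "cnj (z0 $ j) * z0 $ j = 1" using True by (rule cnj_mult_self_norm_1)
  have "Re (w * u) \<le> 0" if "Re u \<le> 0" for u
  proof -
    have "Re (cnj (z0 $ k) * axis j (z0 $ j * u) $ k) \<le> 0" for k
      using \<open>Re u \<le> 0\<close> by (cases "k = j") (simp_all add: axis_def unit mult.assoc[symmetric])
    hence "Re (cnj (g z0) * Dg z0 (axis j (z0 $ j * u))) \<le> 0" by (rule Re_cnj_g_Dg_inward)
    thus ?thesis by (simp add: Dg_z0_axis w_def mult.assoc)
  qed
  (* Re (w * u) \<le> 0 on the closed left half-plane forces w to be a nonnegative real. *)
  from this[of "-1"] this[of \<i>] this[of "-\<i>"] show ?thesis by (simp add: w_def)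
next
  case False
  hence "norm (z0 $ j) < 1" using z0_in_cpolydisc by (simp add: cpolydisc_def order_less_le)
  thus ?thesis by (simp add: cpartial_eq_0_interior)
qed

lemma norm_f_0_less_1: "norm (f 0) < 1"
  using maps_into_disc[of 0] by (simp add: polydisc_def)

lemma julia_constant_pos: "0 < (norm (1 - cnj (f 0) * g z0))\<^sup>2 / (1 - (norm (f 0))\<^sup>2)"
proof -
  have "0 < 1 - (norm (f 0))\<^sup>2" using norm_f_0_less_1 by (simp add: power_less_one_iff)
  moreover have "1 - cnj (f 0) * g z0 \<noteq> 0"
    using one_minus_cnj_mult_nonzero[of "f 0" "g z0"] norm_f_0_less_1 norm_g_z0 by simp
  ultimately show ?thesis by simp
qed

lemma Re_Moebius_radial_le:
  assumes "0 < t" and "t < 1" and "z0 + t *\<^sub>R (- z0) \<in> polydisc \<inter> V"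
  defines "M \<equiv> Moebius_function 0 (f 0)"
  shows "Re (cnj (M (g z0)) * M (g (z0 + t *\<^sub>R - z0))) \<le> Re (cnj (M (g z0)) * M (g z0)) - t"
proof -
  have norm_1_t: "norm (of_real (1 - t) :: complex) = 1 - t"
    using assms(1,2) by (simp del: of_real_diff)
  have M_unit: "norm (M (g z0)) = 1"
    unfolding M_def using norm_f_0_less_1 norm_g_z0 by (rule norm_Moebius_function_eq_1)
  have "z0 + t *\<^sub>R (- z0) = of_real (1 - t) *s z0"
    by (simp add: vec_eq_iff scaleR_conv_of_real[where 'a = complex] algebra_simps)
  hence g_radial: "g (z0 + t *\<^sub>R - z0) = f (of_real (1 - t) *s z0)"
    using assms(3) g_eq_f by metis
  have "Re (cnj (M (g z0)) * M (g (z0 + t *\<^sub>R - z0))) \<le> norm (M (f (of_real (1 - t) *s z0)))"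
    unfolding g_radial using M_unit by (rule Re_cnj_mult_le_norm)
  also have "\<dots> \<le> norm (of_real (1 - t) :: complex)"
  proof -
    have "norm (of_real (1 - t) :: complex) < 1" using norm_1_t assms(1) by linarith
    thus ?thesis unfolding M_def
      using norm_Moebius_polydisc_slice_le[of f z0] holo maps_into_disc z0_in_cpolydisc by blast
  qed
  also have "\<dots> = 1 - t" by (rule norm_1_t)
  finally show ?thesis by (simp add: cnj_mult_self_norm_1[OF M_unit])
qed

lemma julia_radial_estimate:
  "(norm (1 - cnj (f 0) * g z0))\<^sup>2 / (1 - (norm (f 0))\<^sup>2) \<le> Re (cnj (g z0) * Dg z0 z0)"
proof -
  define M where "M = Moebius_function 0 (f 0)"
  define c where "c = (1 - (norm (f 0))\<^sup>2) / (norm (1 - cnj (f 0) * g z0))\<^sup>2"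
  have c_pos: "0 < c" using julia_constant_pos by (simp add: c_def zero_less_divide_iff)
  have "\<forall>\<^sub>F t in at_right 0. z0 + t *\<^sub>R (- z0) \<in> polydisc \<inter> V \<and> t \<in> {0<..<1}"
    using eventually_radial_in_domain eventually_at_right_real[of 0 1] by (auto elim: eventually_elim2)
  then obtain \<delta> where "0 < \<delta>"
    and dom: "\<And>t. 0 < t \<Longrightarrow> t < \<delta> \<Longrightarrow> z0 + t *\<^sub>R (- z0) \<in> polydisc \<inter> V \<and> t < 1"
    unfolding eventually_at_right_field by auto
  have "Re (cnj (g z0) * of_real c * Dg z0 (- z0)) \<le> - 1"
  proof (rule Re_directional_derivative_le[where \<Psi> = "\<lambda>x. cnj (M (g z0)) * M x",
        OF g_deriv[OF z0_in_domain] \<open>0 < \<delta>\<close>])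
    show "z0 + t *\<^sub>R (- z0) \<in> cpolydisc \<inter> V" if "0 < t" "t < \<delta>" for t
      using dom[OF that] polydisc_subset_cpolydisc by auto
    show "((\<lambda>x. cnj (M (g z0)) * M x) has_field_derivative cnj (g z0) * of_real c) (at (g z0))"
      unfolding M_def c_def
      by (rule has_field_derivative_Moebius_function_boundary[OF norm_f_0_less_1 norm_g_z0])
    show "Re (cnj (M (g z0)) * M (g (z0 + t *\<^sub>R - z0))) \<le> Re (cnj (M (g z0)) * M (g z0)) - 1 * t"
      if "0 < t" "t < \<delta>" for t
      using Re_Moebius_radial_le[of t] that dom[OF that] by (simp add: M_def)
  qed
  moreover have "Dg z0 (- z0) = - Dg z0 z0"
    using has_derivative_linear[OF g_deriv[OF z0_in_domain]] by (rule linear_neg)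
  hence "Re (cnj (g z0) * of_real c * Dg z0 (- z0)) = - (c * Re (cnj (g z0) * Dg z0 z0))"
    by (simp add: algebra_simps)
  ultimately have "1 \<le> c * Re (cnj (g z0) * Dg z0 z0)" by linarith
  hence "1 / c \<le> Re (cnj (g z0) * Dg z0 z0)" using c_pos by (simp add: divide_le_eq mult.commute)
  thus ?thesis by (simp add: c_def)
qed

lemma cnj_cpartial_mult_g_z0:
  "cnj (cpartial (Dg z0) j) * g z0 = of_real (Re (cnj (g z0) * cpartial (Dg z0) j * z0 $ j)) * z0 $ j"
proof (cases "norm (z0 $ j) = 1")
  case True
  define w where "w = cnj (g z0) * cpartial (Dg z0) j * z0 $ j"
  have "w = of_real (Re w)" using boundary_coefficient_nonneg[of j] by (simp add: w_def complex_eq_iff)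
  hence "cnj w * z0 $ j = of_real (Re w) * z0 $ j" by (metis complex_cnj_complex_of_real)
  moreover have "cnj w * z0 $ j = cnj (cpartial (Dg z0) j) * g z0 * (cnj (z0 $ j) * z0 $ j)"
    by (simp add: w_def mult_ac)
  ultimately show ?thesis unfolding w_def[symmetric] using cnj_mult_self_norm_1[OF True] by simp
next
  case False
  hence "norm (z0 $ j) < 1" using z0_in_cpolydisc by (simp add: cpolydisc_def order_less_le)
  thus ?thesis by (simp add: cpartial_eq_0_interior)
qed

lemma Re_cnj_g_Dg_z0_eq_sum:
  "Re (cnj (g z0) * Dg z0 z0) = (\<Sum>j\<in>{j. norm (z0 $ j) = 1}. Re (cnj (g z0) * cpartial (Dg z0) j * z0 $ j))"
proof -
  have "Re (cnj (g z0) * Dg z0 z0) = (\<Sum>j\<in>UNIV. Re (cnj (g z0) * cpartial (Dg z0) j * z0 $ j))"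
    by (simp add: Dg_z0_eq_sum_cpartial sum_distrib_left Re_sum mult.assoc)
  also have "\<dots> = (\<Sum>j\<in>{j. norm (z0 $ j) = 1}. Re (cnj (g z0) * cpartial (Dg z0) j * z0 $ j))"
    using z0_in_cpolydisc
    by (intro sum.mono_neutral_right) (auto simp: cpolydisc_def order_less_le cpartial_eq_0_interior)
  finally show ?thesis .
qed

theorem angular_derivative_formula:
  "\<exists>\<gamma> :: 'n \<Rightarrow> real.
     (\<forall>j. 0 \<le> \<gamma> j) \<and> (\<forall>j. norm (z0 $ j) < 1 \<longrightarrow> \<gamma> j = 0) \<and>
     (\<Sum>j\<in>{j. norm (z0 $ j) = 1}. \<gamma> j) \<ge> 1 \<and>
     (\<forall>j. cnj (cpartial (Dg z0) j) * g z0
           = of_real ((norm (1 - cnj (f 0) * g z0))\<^sup>2 / (1 - (norm (f 0))\<^sup>2)) * of_real (\<gamma> j) * z0 $ j)"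
proof -
  define \<rho> where "\<rho> = (norm (1 - cnj (f 0) * g z0))\<^sup>2 / (1 - (norm (f 0))\<^sup>2)"
  define \<beta> where "\<beta> j = Re (cnj (g z0) * cpartial (Dg z0) j * z0 $ j)" for j
  have \<rho>_pos: "0 < \<rho>" unfolding \<rho>_def by (rule julia_constant_pos)
  have "\<rho> \<le> (\<Sum>j\<in>{j. norm (z0 $ j) = 1}. \<beta> j)"
    unfolding \<rho>_def \<beta>_def Re_cnj_g_Dg_z0_eq_sum[symmetric] by (rule julia_radial_estimate)
  show ?thesis
  proof (intro exI[of _ "\<lambda>j. \<beta> j / \<rho>"] conjI allI impI)
    show "0 \<le> \<beta> j / \<rho>" for j
      using boundary_coefficient_nonneg[of j] \<rho>_pos by (simp add: \<beta>_def)
    show "\<beta> j / \<rho> = 0" if "norm (z0 $ j) < 1" for j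
      using that by (simp add: \<beta>_def cpartial_eq_0_interior)
    show "1 \<le> (\<Sum>j\<in>{j. norm (z0 $ j) = 1}. \<beta> j / \<rho>)"
      using \<open>\<rho> \<le> _\<close> \<rho>_pos by (simp add: sum_divide_distrib[symmetric])
    show "cnj (cpartial (Dg z0) j) * g z0
        = of_real ((norm (1 - cnj (f 0) * g z0))\<^sup>2 / (1 - (norm (f 0))\<^sup>2)) * of_real (\<beta> j / \<rho>) * z0 $ j" for j
      using cnj_cpartial_mult_g_z0[of j] \<rho>_pos by (simp add: \<beta>_def \<rho>_def[symmetric])
  qed
qed

end


theorem corollary1p2:
  fixes f :: "complex ^ 'n \<Rightarrow> complex"
    and g :: "complex ^ 'n \<Rightarrow> complex"
    and Dg :: "complex ^ 'n \<Rightarrow> complex ^ 'n \<Rightarrow> complex"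
    and z0 :: "complex ^ 'n"
    and \<alpha> \<theta> :: real
  assumes alpha: "0 < \<alpha>" "\<alpha> < 1"
    and holo: "holo_on f polydisc"
    and maps: "\<forall>z\<in>polydisc. norm (f z) < 1"
    and bdry: "\<forall>j. norm (z0 $ j) \<le> 1" "\<exists>j. norm (z0 $ j) = 1"
    and reg: "C1alpha_ext_at \<alpha> f z0 g Dg"
    and theta: "0 \<le> \<theta>" "\<theta> \<le> 2 * pi" "g z0 = exp (\<i> * of_real \<theta>)"
  shows "\<exists>\<gamma> :: 'n \<Rightarrow> real.
           (\<forall>j. 0 \<le> \<gamma> j) \<and> (\<forall>j. norm (z0 $ j) < 1 \<longrightarrow> \<gamma> j = 0) \<and>
           (\<Sum>j\<in>{j. norm (z0 $ j) = 1}. \<gamma> j) \<ge> 1 \<and>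
           (\<forall>j. cnj (cpartial (Dg z0) j) * exp (\<i> * of_real \<theta>)
                 = of_real ((cmod (1 - cnj (f 0) * exp (\<i> * of_real \<theta>)))\<^sup>2
                             / (1 - (cmod (f 0))\<^sup>2))
                   * of_real (\<gamma> j) * z0 $ j)"
proof -
  obtain V C where V: "open V" "z0 \<in> V"
    and g_eq_f: "\<And>z. z \<in> polydisc \<inter> V \<Longrightarrow> g z = f z"
    and g_deriv: "\<And>z. z \<in> cpolydisc \<inter> V \<Longrightarrow> (g has_derivative Dg z) (at z within cpolydisc \<inter> V)"
    and hoelder: "\<And>b z w. b \<in> Basis \<Longrightarrow> z \<in> cpolydisc \<inter> V \<Longrightarrow> w \<in> cpolydisc \<inter> V \<Longrightarrow>
       norm (Dg z b - Dg w b) \<le> C * dist z w powr \<alpha>"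
    using reg unfolding C1alpha_ext_at_def by metis
  have Dg_continuous: "continuous (at z0 within cpolydisc \<inter> V) (\<lambda>z. Dg z b)" if "b \<in> Basis" for b
  proof -
    have "continuous_on (cpolydisc \<inter> V) (\<lambda>z. Dg z b)"
      by (rule hoelder_imp_continuous_on[OF alpha(1)]) (rule hoelder[OF that])
    moreover have "z0 \<in> cpolydisc \<inter> V" using bdry(1) V(2) by (simp add: cpolydisc_def)
    ultimately show ?thesis by (simp add: continuous_on_eq_continuous_within)
  qed
  interpret polydisc_boundary_point f g Dg z0 V
    by unfold_locales
       (use holo maps bdry(1) V g_eq_f g_deriv Dg_continuous theta(3) in \<open>auto simp: cpolydisc_def\<close>)
  show ?thesis using angular_derivative_formula unfolding theta(3) .
qed

end
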